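(* Suppose $m\ge n\ge 2$. If $P_1,\dots,P_\ell$ are deterministic perfect channels from $\{1,\dots,m\}$ to $\{1,\dots,n\}$ such that at least one column of $P_1+\cdots+P_\ell$ has no entry equal to $\ell$, then $\{P_1,\dots,P_\ell\}$ is not $\mathcal{I}$-minimized.
   Context: Channels from $\{1,\dots,m\}$ to $\{1,\dots,n\}$ are $m\times n$ row-stochastic matrices; $\mathcal{D}$ is the set of deterministic (0-1) channels, $\mathrm{rank}(D)$ the matrix rank. A deterministic perfect channel is a deterministic channel of rank $\min(m,n)$. For a channel $W$, $\Lambda(W)=\{\lambda\text{ probability distribution on }\mathcal{D}: W=\sum_D\lambda_DD\}$, $C_{11}(\lambda)=\sum_D\lambda_D\log_2\mathrm{rank}(D)$, $\underline{C}_{11}(W)=\inf_{\lambda\in\Lambda(W)}C_{11}(\lambda)$. A subset $S\subseteq\mathcal{D}$ is $\mathcal{I}$-minimized if there is a probability distribution $\lambda$ on $\mathcal{D}$ with $\mathrm{supp}(\lambda)=S$ and $C_{11}(\lambda)=\underline{C}_{11}(W)$ where $W=\sum_D\lambda_DD$. *)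

theory Defs
  imports "HOL-Analysis.Analysis"
begin

text \<open>Channels from {1..m} to {1..n} are m x n real matrices, rendered as
  real^'n^'m with finite index types 'm (rows/inputs) and 'n (columns/outputs),
  m = CARD('m), n = CARD('n).\<close>

definition channel :: "real^'n^'m \<Rightarrow> bool" where
  "channel W \<longleftrightarrow> (\<forall>i j. W $ i $ j \<ge> 0) \<and> (\<forall>i. (\<Sum>j\<in>UNIV. W $ i $ j) = 1)"

definition det_channels :: "(real^'n^'m) set" where
  "det_channels = {D. channel D \<and> (\<forall>i j. D $ i $ j = 0 \<or> D $ i $ j = 1)}"

definition det_perfect :: "real^'n^'m \<Rightarrow> bool" where
  "det_perfect D \<longleftrightarrow> D \<in> det_channels \<and> rank D = min CARD('m) CARD('n)"

definition is_dist :: "(real^'n^'m \<Rightarrow> real) \<Rightarrow> bool" where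
  "is_dist p \<longleftrightarrow> (\<forall>D. p D \<ge> 0) \<and> (\<forall>D. D \<notin> det_channels \<longrightarrow> p D = 0)
     \<and> (\<Sum>D\<in>det_channels. p D) = 1"

definition mix :: "(real^'n^'m \<Rightarrow> real) \<Rightarrow> real^'n^'m" where
  "mix p = (\<Sum>D\<in>det_channels. p D *\<^sub>R D)"

definition Lambda :: "real^'n^'m \<Rightarrow> (real^'n^'m \<Rightarrow> real) set" where
  "Lambda W = {p. is_dist p \<and> W = mix p}"

definition C11 :: "(real^'n^'m \<Rightarrow> real) \<Rightarrow> real" where
  "C11 p = (\<Sum>D\<in>det_channels. p D * log 2 (real (rank D)))"

definition C11_lower :: "real^'n^'m \<Rightarrow> real" where
  "C11_lower W = Inf (C11 ` Lambda W)"

definition supp :: "(real^'n^'m \<Rightarrow> real) \<Rightarrow> (real^'n^'m) set" where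
  "supp p = {D. p D \<noteq> 0}"

definition I_minimized :: "(real^'n^'m) set \<Rightarrow> bool" where
  "I_minimized S \<longleftrightarrow> S \<subseteq> det_channels \<and>
     (\<exists>p. is_dist p \<and> supp p = S \<and> C11 p = C11_lower (mix p))"

end

theory Submission
  imports Defs
begin

text \<open>Suppose the channels were \<open>\<I>\<close>-minimized by \<open>p\<close>. All of them have rank \<open>n\<close>, so
  \<open>C11 p = log n\<close>. The mixture \<open>W\<close> can also be decomposed with the rows chosen
  independently, giving the deterministic channel of \<open>f\<close> the weight \<open>\<Prod>i. W i (f i)\<close>.
  The hypothesis on the column \<open>j\<close> makes every \<open>W i j < 1\<close>, so this decomposition puts
  weight \<open>\<Prod>i. 1 - W i j > 0\<close> on channels never outputting \<open>j\<close>; these have a zero column,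
  hence rank at most \<open>n - 1\<close>, and the decomposition beats \<open>log n\<close>.\<close>

definition det_channel_of :: "('m \<Rightarrow> 'n) \<Rightarrow> real^'n^'m" where
  "det_channel_of f = (\<chi> i j. if f i = j then 1 else 0)"

lemma det_channel_of_nth [simp]: "det_channel_of f $ i $ j = (if f i = j then 1 else 0)"
  by (simp add: det_channel_of_def)

lemma inj_det_channel_of: "inj det_channel_of"
proof
  fix f g
  assume "det_channel_of f = det_channel_of g"
  then have "det_channel_of g $ i $ f i = 1" for i
    by (metis det_channel_of_nth)
  then have "g i = f i" for i
    by (metis det_channel_of_nth zero_neq_one)
  then show "f = g"
    by auto
qed

lemma det_channels_eq_range: "det_channels = range det_channel_of"
proof (intro equalityI subsetI)
  fix D :: "real^'n^'m"
  assume "D \<in> det_channels"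
  then have nonneg: "\<And>i j. D $ i $ j \<ge> 0" and row: "\<And>i. (\<Sum>j\<in>UNIV. D $ i $ j) = 1"
    and zero_one: "\<And>i j. D $ i $ j = 0 \<or> D $ i $ j = 1"
    unfolding det_channels_def channel_def by auto
  have "\<exists>j. D $ i $ j = 1" for i
    using row[of i] zero_one[of i] by (metis (no_types) sum.neutral zero_neq_one)
  then obtain f where f: "\<And>i. D $ i $ f i = 1"
    by metis
  have "D $ i $ j = 0" if "j \<noteq> f i" for i j
  proof -
    have "(\<Sum>j'\<in>{j, f i}. D $ i $ j') \<le> (\<Sum>j'\<in>UNIV. D $ i $ j')"
      by (rule sum_mono2) (auto simp: nonneg)
    then show ?thesis
      using that f[of i] row[of i] zero_one[of i j] by simp
  qed
  then have "D = det_channel_of f"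
    by (auto simp: vec_eq_iff f)
  then show "D \<in> range det_channel_of"
    by blast
qed (auto simp: det_channels_def channel_def)

lemma det_channels_nth: "D \<in> det_channels \<Longrightarrow> D $ i $ j = 0 \<or> D $ i $ j = 1"
  by (simp add: det_channels_def)

lemma finite_det_channels: "finite (det_channels :: (real^'n^'m) set)"
  by (simp add: det_channels_eq_range)

lemma sum_det_channels: "(\<Sum>D\<in>det_channels. g D) = (\<Sum>f\<in>UNIV. g (det_channel_of f))"
  by (simp add: det_channels_eq_range sum.reindex[OF inj_det_channel_of])

lemma rank_det_channel_of_pos: "rank (det_channel_of f) > 0"
proof -
  have "det_channel_of f $ i $ f i \<noteq> 0" for i
    by simp
  then have "det_channel_of f \<noteq> 0"
    by (metis vec_lambda_unique zero_index)
  then show ?thesis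
    using rank_eq_0 by blast
qed

lemma rank_le_if_zero_column:
  fixes A :: "real^'n^'m"
  assumes "\<And>i. A $ i $ j = 0"
  shows "rank A \<le> CARD('n) - 1"
proof -
  have "columns A \<subseteq> span ((\<lambda>k. column k A) ` (UNIV - {j}))"
  proof
    fix x
    assume "x \<in> columns A"
    then obtain k where "x = column k A"
      by (auto simp: columns_def)
    moreover have "column j A = 0"
      using assms by (simp add: column_def vec_eq_iff)
    ultimately show "x \<in> span ((\<lambda>k. column k A) ` (UNIV - {j}))"
      by (cases "k = j") (auto simp: span_zero intro: span_base)
  qed
  then have "dim (columns A) \<le> card ((\<lambda>k. column k A) ` (UNIV - {j}))"
    by (intro dim_le_card) auto
  also have "\<dots> \<le> card (UNIV - {j})"
    by (rule card_image_le) simp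
  finally show ?thesis
    by (simp add: column_rank_def card_Diff_singleton)
qed

lemma channel_mix:
  assumes "is_dist p"
  shows "channel (mix p)"
proof -
  have entry: "mix p $ i $ j = (\<Sum>D\<in>det_channels. p D * D $ i $ j)" for i j
    by (simp add: mix_def)
  have "(\<Sum>j\<in>UNIV. mix p $ i $ j) = (\<Sum>D\<in>det_channels. p D * (\<Sum>j\<in>UNIV. D $ i $ j))" for i
    by (simp add: entry sum_distrib_left sum.swap[of _ UNIV])
  also have "\<dots> i = (\<Sum>D\<in>det_channels. p D)" for i
    by (intro sum.cong) (auto simp: det_channels_def channel_def)
  finally show ?thesis
    using assms unfolding channel_def is_dist_def
    by (auto simp: entry det_channels_def channel_def intro!: sum_nonneg)
qed

lemma mix_nth_lt_one:
  assumes "is_dist p" and "p D0 \<noteq> 0" and "D0 $ i $ j = 0"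
  shows "mix p $ i $ j < 1"
proof -
  have nonneg: "\<And>D. p D \<ge> 0" and total: "(\<Sum>D\<in>det_channels. p D) = 1"
    and D0: "D0 \<in> det_channels"
    using assms(1,2) unfolding is_dist_def by auto
  have "mix p $ i $ j = (\<Sum>D\<in>det_channels - {D0}. p D * D $ i $ j)"
    by (simp add: mix_def sum.remove[OF finite_det_channels D0] assms(3))
  also have "\<dots> \<le> (\<Sum>D\<in>det_channels - {D0}. p D)"
    by (intro sum_mono mult_left_le nonneg) (metis DiffD1 det_channels_nth order.refl zero_le_one)
  also have "\<dots> = 1 - p D0"
    using total sum.remove[OF finite_det_channels D0, of p] by simp
  finally show ?thesis
    using assms(2) nonneg[of D0] by simp
qed

lemma sum_ne_card_imp_ex_ne_one:
  fixes a :: "'a \<Rightarrow> real"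
  assumes "(\<Sum>k\<in>K. a k) \<noteq> real (card K)"
  shows "\<exists>k\<in>K. a k \<noteq> 1"
  using assms by (metis (mono_tags) mult_1_right of_nat_id real_of_card sum.cong sum_distrib_left)

lemma C11_nonneg:
  assumes "is_dist p"
  shows "C11 p \<ge> 0"
proof -
  have "log 2 (real k) \<ge> 0" for k
    by (cases k) (auto simp: log_def)
  then show ?thesis
    using assms unfolding C11_def is_dist_def by (intro sum_nonneg mult_nonneg_nonneg) auto
qed

lemma C11_lower_le: "p \<in> Lambda W \<Longrightarrow> C11_lower W \<le> C11 p"
  unfolding C11_lower_def Lambda_def
  by (rule cInf_lower) (auto simp: bdd_below_def intro!: exI[of _ 0] C11_nonneg)

lemma C11_eq_if_constant_rank:
  assumes "is_dist p" and "\<And>D. p D \<noteq> 0 \<Longrightarrow> rank D = r"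
  shows "C11 p = log 2 r"
proof -
  have "C11 p = (\<Sum>D\<in>det_channels. p D * log 2 r)"
    unfolding C11_def by (intro sum.cong) (metis assms(2) mult_zero_left)+
  then show ?thesis
    using assms(1) by (simp add: is_dist_def sum_distrib_right[symmetric])
qed

text \<open>On the deterministic channel with output map \<open>f\<close> this is \<open>\<Prod>i. W i (f i)\<close>: the rows
  are drawn independently according to the rows of \<open>W\<close>.\<close>

definition row_product_dist :: "real^'n^'m \<Rightarrow> real^'n^'m \<Rightarrow> real" where
  "row_product_dist W D =
     (if D \<in> det_channels then \<Prod>i\<in>UNIV. \<Sum>j\<in>UNIV. D $ i $ j * W $ i $ j else 0)"

lemma row_product_dist_det_channel_of:
  "row_product_dist W (det_channel_of f) = (\<Prod>i\<in>UNIV. W $ i $ f i)"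
proof -
  have "(\<Sum>j\<in>UNIV. det_channel_of f $ i $ j * W $ i $ j)
      = (\<Sum>j\<in>UNIV. if f i = j then W $ i $ j else 0)" for i
    by (intro sum.cong) auto
  then show ?thesis
    by (simp add: row_product_dist_def det_channels_eq_range)
qed

lemma sum_prod_funs:
  fixes h :: "'a::finite \<Rightarrow> 'b \<Rightarrow> real"
  assumes "finite B"
  shows "(\<Sum>f | \<forall>i. f i \<in> B. \<Prod>i\<in>UNIV. h i (f i)) = (\<Prod>i\<in>UNIV. \<Sum>j\<in>B. h i j)"
  using prod_sum_PiE[of "UNIV :: 'a set" "\<lambda>_. B" h] assms
  by (simp add: PiE_UNIV_domain Pi_def)

lemma is_dist_row_product_dist:
  fixes W :: "real^'n^'m"
  assumes "channel W"
  shows "is_dist (row_product_dist W)"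
proof -
  have "(\<Sum>D\<in>det_channels. row_product_dist W D) = (\<Prod>i\<in>UNIV. \<Sum>j\<in>UNIV. W $ i $ j)"
    using sum_prod_funs[of "UNIV :: 'n set" "\<lambda>i j. W $ i $ j"]
    by (simp add: sum_det_channels row_product_dist_det_channel_of)
  then show ?thesis
    using assms
    by (auto simp: is_dist_def channel_def row_product_dist_def det_channels_def
        intro!: prod_nonneg sum_nonneg)
qed

lemma mix_row_product_dist:
  fixes W :: "real^'n^'m"
  assumes "channel W"
  shows "mix (row_product_dist W) = W"
proof (intro vec_eq_iff[THEN iffD2] allI)
  fix a b
  have row: "\<And>i. (\<Sum>j\<in>UNIV. W $ i $ j) = 1"
    using assms by (simp add: channel_def)
  \<comment> \<open>Fixing the output of row \<open>a\<close> to \<open>b\<close> is the same as replacing row \<open>a\<close> of \<open>W\<close> by \<open>W a b\<close> at \<open>b\<close>.\<close>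
  define h where "h i j = (if i = a then (if j = b then W $ a $ b else 0) else W $ i $ j)" for i j
  have "mix (row_product_dist W) $ a $ b
      = (\<Sum>f\<in>UNIV. row_product_dist W (det_channel_of f) * det_channel_of f $ a $ b)"
    by (simp add: mix_def sum_det_channels)
  also have "\<dots> = (\<Sum>f\<in>UNIV. \<Prod>i\<in>UNIV. h i (f i))"
  proof (intro sum.cong refl)
    fix f :: "'m \<Rightarrow> 'n"
    have "(\<Prod>i\<in>UNIV. h i (f i))
        = (\<Prod>i\<in>UNIV. W $ i $ f i * (if i = a then (if f a = b then 1 else 0) else 1))"
      unfolding h_def by (intro prod.cong) auto
    then show "row_product_dist W (det_channel_of f) * det_channel_of f $ a $ b
        = (\<Prod>i\<in>UNIV. h i (f i))"
      by (simp add: row_product_dist_det_channel_of prod.distrib prod.If_cases)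
  qed
  also have "\<dots> = (\<Prod>i\<in>UNIV. \<Sum>j\<in>UNIV. h i j)"
    using sum_prod_funs[of "UNIV :: 'n set" h] by simp
  also have "\<dots> = (\<Prod>i\<in>UNIV. if i = a then W $ a $ b else 1)"
    by (intro prod.cong) (simp_all add: h_def row)
  finally show "mix (row_product_dist W) $ a $ b = W $ a $ b"
    by simp
qed

lemma row_product_dist_in_Lambda: "channel W \<Longrightarrow> row_product_dist W \<in> Lambda W"
  by (simp add: Lambda_def is_dist_row_product_dist mix_row_product_dist)

lemma sum_row_product_dist_avoiding:
  fixes W :: "real^'n^'m"
  assumes "channel W"
  shows "(\<Sum>f | \<forall>i. f i \<noteq> j. row_product_dist W (det_channel_of f)) = (\<Prod>i\<in>UNIV. 1 - W $ i $ j)"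
proof -
  have "(\<Sum>f | \<forall>i. f i \<noteq> j. row_product_dist W (det_channel_of f))
      = (\<Prod>i\<in>UNIV. \<Sum>j'\<in>UNIV - {j}. W $ i $ j')"
    using sum_prod_funs[of "UNIV - {j}" "\<lambda>i j. W $ i $ j"]
    by (simp add: row_product_dist_det_channel_of)
  also have "\<dots> = (\<Prod>i\<in>UNIV. 1 - W $ i $ j)"
    using assms by (simp add: sum_diff1 channel_def)
  finally show ?thesis .
qed

lemma C11_lower_less_log_card:
  fixes W :: "real^'n^'m"
  assumes "channel W" and "CARD('n) \<ge> 2" and "\<And>i. W $ i $ j < 1"
  shows "C11_lower W < log 2 CARD('n)"
proof -
  define n where "n = CARD('n)"
  define q where "q = row_product_dist W"
  define avoiding where "avoiding = {f :: 'm \<Rightarrow> 'n. \<forall>i. f i \<noteq> j}"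
  define \<delta> where "\<delta> = log 2 n - log 2 (real n - 1)"
  have n: "n \<ge> 2"
    using assms(2) by (simp add: n_def)
  have q_nonneg: "q D \<ge> 0" for D
    using is_dist_row_product_dist[OF assms(1)] by (simp add: q_def is_dist_def)
  have log_rank: "log 2 (rank (det_channel_of f)) \<le> log 2 n - (if f \<in> avoiding then \<delta> else 0)"
    for f
  proof -
    have "rank (det_channel_of f) \<le> n"
      using rank_bound[of "det_channel_of f"] by (simp add: n_def)
    moreover have "rank (det_channel_of f) \<le> n - 1" if "f \<in> avoiding"
      using that unfolding n_def avoiding_def by (intro rank_le_if_zero_column[of _ j]) simp
    ultimately show ?thesis
      using rank_det_channel_of_pos[of f] n by (auto simp: \<delta>_def)
  qed
  have "C11 q = (\<Sum>f\<in>UNIV. q (det_channel_of f) * log 2 (rank (det_channel_of f)))"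
    by (simp add: C11_def sum_det_channels)
  also have "\<dots> \<le> (\<Sum>f\<in>UNIV. q (det_channel_of f) * (log 2 n - (if f \<in> avoiding then \<delta> else 0)))"
    by (intro sum_mono mult_left_mono log_rank q_nonneg)
  also have "\<dots> = log 2 n * (\<Sum>f\<in>UNIV. q (det_channel_of f))
      - \<delta> * (\<Sum>f\<in>avoiding. q (det_channel_of f))"
    by (simp add: right_diff_distrib sum_subtractf sum_distrib_left sum_distrib_right
        if_distrib[of "(*) _"] sum.If_cases mult.commute)
  also have "\<dots> = log 2 n - \<delta> * (\<Prod>i\<in>UNIV. 1 - W $ i $ j)"
    using is_dist_row_product_dist[OF assms(1)]
      sum_row_product_dist_avoiding[OF assms(1), of j]
    by (simp add: q_def avoiding_def is_dist_def sum_det_channels)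
  also have "\<dots> < log 2 n"
    using n assms(3) by (simp add: \<delta>_def prod_pos)
  finally show ?thesis
    using C11_lower_le[OF row_product_dist_in_Lambda[OF assms(1)]] by (simp add: q_def n_def)
qed

theorem proposition5:
  fixes P :: "nat \<Rightarrow> real^'n^'m" and l :: nat
  assumes "CARD('m) \<ge> CARD('n)" and "CARD('n) \<ge> 2"
    and "\<forall>k\<in>{1..l}. det_perfect (P k)"
    and "\<exists>j. \<forall>i. (\<Sum>k=1..l. P k $ i $ j) \<noteq> real l"
  shows "\<not> I_minimized (P ` {1..l})"
proof
  assume "I_minimized (P ` {1..l})"
  then obtain p where p: "is_dist p" and supp: "supp p = P ` {1..l}"
    and minimal: "C11 p = C11_lower (mix p)"
    unfolding I_minimized_def by blast
  obtain j where j: "\<And>i. (\<Sum>k=1..l. P k $ i $ j) \<noteq> real l"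
    using assms(4) by blast
  have "det_perfect D" if "p D \<noteq> 0" for D
    using that supp assms(3) unfolding supp_def by (metis (mono_tags) imageE mem_Collect_eq)
  then have "C11 p = log 2 CARD('n)"
    using assms(1) by (intro C11_eq_if_constant_rank[OF p]) (simp add: det_perfect_def)
  moreover have "mix p $ i $ j < 1" for i
  proof -
    obtain k where k: "k \<in> {1..l}" "P k $ i $ j \<noteq> 1"
      using sum_ne_card_imp_ex_ne_one[of "\<lambda>k. P k $ i $ j" "{1..l}"] j[of i] by auto
    have "P k \<in> det_channels"
      using k(1) assms(3) by (simp add: det_perfect_def)
    then have "P k $ i $ j = 0"
      using det_channels_nth k(2) by blast
    moreover have "p (P k) \<noteq> 0"
      using supp k(1) by (auto simp: supp_def)
    ultimately show ?thesis
      by (intro mix_nth_lt_one[OF p])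
  qed
  ultimately show False
    using C11_lower_less_log_card[OF channel_mix[OF p] assms(2), of j] minimal by simp
qed

end
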